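(* Let $L$ be a positive definite even lattice with dual lattice $L^\circ$, and let $\sigma$ be an isometry of $L$ of order $p\ge 2$ which is fixed-point-free on $L$ (extended $\mathbb{Q}$-linearly to $L^\circ$). Let $s=p$ if $p$ is even and $s=2p$ if $p$ is odd, and let $c^\sigma: L\times L\to \mathbb{Z}_s$ be defined by $$c^\sigma(\alpha,\beta)=\frac{s}{p}\sum_{i=1}^{p-1}\langle i\sigma^i(\alpha),\beta\rangle + s\mathbb{Z}.$$ Let $R_L^\sigma=\{\alpha\in L \mid c^\sigma(\alpha,\beta)=0 \text{ for all }\beta\in L\}$. Then $$R_L^\sigma=\big((1-\sigma)L^\circ\big)\cap L.$$
   Context: $L^\circ=\{\alpha\in\mathbb{Q}\otimes_{\mathbb{Z}}L \mid \langle\alpha,L\rangle\subset\mathbb{Z}\}$. "Fixed-point-free" means $\sigma$ fixes no nonzero element of $L$. *)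

theory Defs
  imports "HOL-Analysis.Analysis"
begin

text \<open>A lattice of rank CARD('n) is modelled as the standard lattice of integer
vectors inside the rational space rat^'n (= Q tensor L), with the bilinear form
given by a Gram matrix G.\<close>

definition lat :: "(rat^'n) set" where
  "lat = {x. \<forall>i. x $ i \<in> \<int>}"

definition bil :: "rat^'n^'n \<Rightarrow> rat^'n \<Rightarrow> rat^'n \<Rightarrow> rat" where
  "bil G x y = (\<Sum>i\<in>UNIV. \<Sum>j\<in>UNIV. x $ i * G $ i $ j * y $ j)"

definition dual_lat :: "rat^'n^'n \<Rightarrow> (rat^'n) set" where
  "dual_lat G = {a. \<forall>b\<in>lat. bil G a b \<in> \<int>}"

definition pos_def_even_lattice :: "rat^'n^'n \<Rightarrow> bool" where
  "pos_def_even_lattice G \<longleftrightarrow>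
     (\<forall>i j. G $ i $ j = G $ j $ i) \<and>
     (\<forall>x\<in>lat. \<forall>y\<in>lat. bil G x y \<in> \<int>) \<and>
     (\<forall>x\<in>lat. \<exists>k::int. bil G x x = 2 * of_int k) \<and>
     (\<forall>x\<in>lat. x \<noteq> 0 \<longrightarrow> bil G x x > 0)"

definition lattice_isometry :: "rat^'n^'n \<Rightarrow> rat^'n^'n \<Rightarrow> bool" where
  "lattice_isometry G S \<longleftrightarrow>
     (\<lambda>x. S *v x) ` lat = lat \<and>
     (\<forall>x\<in>lat. \<forall>y\<in>lat. bil G (S *v x) (S *v y) = bil G x y)"

definition has_order :: "rat^'n^'n \<Rightarrow> nat \<Rightarrow> bool" where
  "has_order S p \<longleftrightarrow> 0 < p \<and> ((\<lambda>x. S *v x) ^^ p) = id \<and>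
     (\<forall>k. 0 < k \<and> k < p \<longrightarrow> ((\<lambda>x. S *v x) ^^ k) \<noteq> id)"

definition fixed_point_free :: "rat^'n^'n \<Rightarrow> bool" where
  "fixed_point_free S \<longleftrightarrow> (\<forall>x\<in>lat. S *v x = x \<longrightarrow> x = 0)"

definition s_param :: "nat \<Rightarrow> nat" where
  "s_param p = (if even p then p else 2 * p)"

text \<open>The integer representative (s/p) * sum_{i=1}^{p-1} <i sigma^i(a), b>;
c^sigma(a,b) is its class modulo s.\<close>
definition c_rep :: "rat^'n^'n \<Rightarrow> rat^'n^'n \<Rightarrow> nat \<Rightarrow> rat^'n \<Rightarrow> rat^'n \<Rightarrow> rat" where
  "c_rep G S p a b = (of_nat (s_param p) / of_nat p) *
      (\<Sum>i\<in>{1..p-1}. bil G (of_nat i *s ((\<lambda>x. S *v x) ^^ i) a) b)"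

definition R_sigma :: "rat^'n^'n \<Rightarrow> rat^'n^'n \<Rightarrow> nat \<Rightarrow> (rat^'n) set" where
  "R_sigma G S p = {a\<in>lat. \<forall>b\<in>lat. \<exists>k::int. c_rep G S p a b = of_int (int (s_param p) * k)}"

end

theory Submission
  imports Defs
begin

text \<open>Put N = \<Sum>{i \<sigma>^i | 1 \<le> i \<le> p - 1}, so that c^\<sigma>(\<alpha>, \<beta>) = (s/p) \<langle>N \<alpha>, \<beta>\<rangle>.
Summation by parts gives N (1 - \<sigma>) = \<Sum>{\<sigma>^i | 1 \<le> i \<le> p - 1} - (p - 1) \<sigma>^p = -p, because
the orbit sum \<Sum>{\<sigma>^i x | 0 \<le> i < p} is fixed by \<sigma> and hence vanishes. Thus \<alpha> lies in
R iff \<langle>N \<alpha>, L\<rangle> \<subseteq> p\<int> iff \<delta> = -N \<alpha> / p lies in the dual lattice, and then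
(1 - \<sigma>) \<delta> = \<alpha>; conversely N ((1 - \<sigma>) \<delta>) = -p \<delta> for every \<delta> in the dual lattice.\<close>

lemma bil_linear_left: "Vector_Spaces.linear (*s) (*) (\<lambda>x. bil G x b)"
  by unfold_locales
    (simp_all add: bil_def vector_scalar_mult_def sum.distrib sum_distrib_left algebra_simps)

interpretation bil_left: Vector_Spaces.linear "(*s)" "(*)" "\<lambda>x. bil G x b"
  by (rule bil_linear_left)

lemma linear_iterate:
  fixes S :: "'a::field^'n^'n"
  shows "Vector_Spaces.linear (*s) (*s) ((\<lambda>x. S *v x) ^^ k)"
proof (induction k)
  case 0
  show ?case using vec.linear_id by (simp add: id_def)
next
  case (Suc k)
  then show ?case
    using Vector_Spaces.linear_compose[OF Suc matrix_vector_mul_linear_gen] by (simp add: o_def)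
qed

interpretation iterate: Vector_Spaces.linear "(*s)" "(*s)" "(\<lambda>x. S *v x) ^^ k"
  for S :: "'a::field^'n^'n"
  by (rule linear_iterate)

lemma lat_multiple_exists: "\<exists>m::int. m > 0 \<and> of_int m *s y \<in> lat"
proof -
  define m where "m = (\<Prod>i\<in>UNIV. snd (quotient_of (y $ i)))"
  have "m > 0"
    unfolding m_def using quotient_of_denom_pos' by (simp add: prod_pos)
  moreover have "of_int m * y $ i \<in> \<int>" for i
  proof -
    obtain a b where ab: "quotient_of (y $ i) = (a, b)" by fastforce
    have "b dvd m" unfolding m_def
      by (rule dvd_prod_eqI[of UNIV i]) (use ab in auto)
    then obtain k where "m = b * k" by blast
    moreover have "b > 0" using quotient_of_denom_pos[OF ab] .
    ultimately have "of_int m * y $ i = of_int (k * a)"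
      by (simp add: quotient_of_div[OF ab])
    then show ?thesis by simp
  qed
  ultimately show ?thesis unfolding lat_def by auto
qed

lemma fixed_point_free_rational:
  assumes "fixed_point_free S" and "S *v y = y"
  shows "y = 0"
proof -
  obtain m :: int where m: "m > 0" "of_int m *s y \<in> lat"
    using lat_multiple_exists by blast
  have "S *v (of_int m *s y) = of_int m *s y"
    using assms(2) by (simp add: vector_scalar_commute)
  then have "of_int m *s y = 0"
    using m(2) assms(1) unfolding fixed_point_free_def by blast
  with m(1) show "y = 0" by (simp add: vec_eq_iff)
qed

lemma orbit_sum_eq_0:
  fixes S :: "'a::field^'n^'n"
  assumes period: "(\<lambda>x. S *v x) ^^ p = id"
    and no_fixed: "\<And>y. S *v y = y \<Longrightarrow> y = 0"
  shows "(\<Sum>i<p. ((\<lambda>x. S *v x) ^^ i) x) = 0"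
proof -
  let ?g = "\<lambda>i. ((\<lambda>x. S *v x) ^^ i) x"
  have "S *v (\<Sum>i<p. ?g i) = (\<Sum>i<p. ?g (Suc i))"
    by (simp add: vec.sum)
  also have "\<dots> = (\<Sum>i<p. ?g i)"
    using sum.lessThan_Suc_shift[of ?g p] sum.lessThan_Suc[of ?g p] period by simp
  finally show ?thesis by (rule no_fixed)
qed

lemma sum_by_parts_vec:
  fixes g :: "nat \<Rightarrow> 'a::comm_ring_1^'n"
  shows "(\<Sum>i=1..n. of_nat i *s (g i - g (Suc i))) = (\<Sum>i=1..n. g i) - of_nat n *s g (Suc n)"
  by (induction n) (simp_all add: vector_ssub_ldistrib vector_sadd_rdistrib algebra_simps)

definition weighted_orbit_sum :: "'a::semiring_1^'n^'n \<Rightarrow> nat \<Rightarrow> 'a^'n \<Rightarrow> 'a^'n" where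
  "weighted_orbit_sum S p x = (\<Sum>i=1..p-1. of_nat i *s ((\<lambda>x. S *v x) ^^ i) x)"

lemma weighted_orbit_sum_diff:
  fixes S :: "'a::field^'n^'n"
  assumes period: "(\<lambda>x. S *v x) ^^ p = id" and "p > 0"
    and no_fixed: "\<And>y. S *v y = y \<Longrightarrow> y = 0"
  shows "weighted_orbit_sum S p (x - S *v x) = - (of_nat p *s x)"
proof -
  let ?g = "\<lambda>i. ((\<lambda>x. S *v x) ^^ i) x"
  have "(\<Sum>i<p. ?g i) = ?g 0 + (\<Sum>i=1..p-1. ?g i)"
  proof -
    have "{..<p} = {0..p-1}" using \<open>p > 0\<close> by auto
    then show ?thesis by (simp add: sum.atLeast_Suc_atMost)
  qed
  then have tail: "(\<Sum>i=1..p-1. ?g i) = - x"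
    using orbit_sum_eq_0[OF period no_fixed, of x] by (simp add: add_eq_0_iff)
  have "weighted_orbit_sum S p (x - S *v x) = (\<Sum>i=1..p-1. of_nat i *s (?g i - ?g (Suc i)))"
    unfolding weighted_orbit_sum_def by (simp add: iterate.diff funpow_swap1)
  also have "\<dots> = - x - of_nat (p - 1) *s x"
    using sum_by_parts_vec[where n="p - 1" and g="?g"] \<open>p > 0\<close> period tail by simp
  finally show ?thesis
    using \<open>p > 0\<close> by (simp add: vec_eq_iff of_nat_diff algebra_simps)
qed

lemma weighted_orbit_sum_commute:
  fixes S :: "'a::field^'n^'n"
  shows "weighted_orbit_sum S p x - S *v weighted_orbit_sum S p x =
    weighted_orbit_sum S p (x - S *v x)"
  unfolding weighted_orbit_sum_def
  by (simp add: vec.sum vector_scalar_commute funpow_swap1 iterate.diff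
      vector_ssub_ldistrib sum_subtractf)

lemma c_rep_eq: "c_rep G S p a b = of_nat (s_param p) / of_nat p * bil G (weighted_orbit_sum S p a) b"
  unfolding c_rep_def weighted_orbit_sum_def by (simp add: bil_left.sum bil_left.scale)

lemma R_sigma_imp_coboundary:
  fixes G S :: "rat^'n^'n"
  assumes period: "(\<lambda>x. S *v x) ^^ p = id" and "p > 0"
    and no_fixed: "\<And>y. S *v y = y \<Longrightarrow> y = 0"
    and a: "a \<in> R_sigma G S p"
  shows "a \<in> {d - S *v d | d. d \<in> dual_lat G}"
proof -
  let ?N = "weighted_orbit_sum S p"
  define d where "d = (- 1 / of_nat p) *s ?N a"
  have p: "(of_nat p :: rat) \<noteq> 0" using \<open>p > 0\<close> by simp
  have "d - S *v d = (- 1 / of_nat p) *s (?N a - S *v ?N a)"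
    unfolding d_def by (simp add: vector_scalar_commute vec.neg vector_ssub_ldistrib)
  also have "\<dots> = a"
    using p weighted_orbit_sum_diff[OF period \<open>p > 0\<close> no_fixed]
    by (simp add: weighted_orbit_sum_commute vec_eq_iff)
  finally have "a = d - S *v d" ..
  moreover have "bil G d b \<in> \<int>" if "b \<in> lat" for b
  proof -
    obtain k :: int where "c_rep G S p a b = of_int (int (s_param p) * k)"
      using a \<open>b \<in> lat\<close> unfolding R_sigma_def by blast
    moreover have "of_nat (s_param p) \<noteq> (0::rat)"
      using \<open>p > 0\<close> by (simp add: s_param_def)
    ultimately have "bil G (?N a) b = of_nat p * of_int k"
      using p by (simp add: c_rep_eq field_simps)
    then have "bil G d b = - of_int k"
      unfolding d_def using p by (simp add: bil_left.scale bil_left.neg)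
    then show ?thesis by simp
  qed
  ultimately show ?thesis unfolding dual_lat_def by blast
qed

lemma coboundary_in_R_sigma:
  fixes G S :: "rat^'n^'n"
  assumes period: "(\<lambda>x. S *v x) ^^ p = id" and "p > 0"
    and no_fixed: "\<And>y. S *v y = y \<Longrightarrow> y = 0"
    and d: "d \<in> dual_lat G" and "d - S *v d \<in> lat"
  shows "d - S *v d \<in> R_sigma G S p"
  unfolding R_sigma_def
proof (intro CollectI conjI ballI \<open>d - S *v d \<in> lat\<close>)
  fix b :: "rat^'n" assume "b \<in> lat"
  then obtain k :: int where k: "bil G d b = of_int k"
    using d unfolding dual_lat_def by (blast elim: Ints_cases)
  have "c_rep G S p (d - S *v d) b = of_int (int (s_param p) * (- k))"
    using \<open>p > 0\<close> k
    by (simp add: c_rep_eq weighted_orbit_sum_diff[OF period \<open>p > 0\<close> no_fixed]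
        bil_left.scale bil_left.neg)
  then show "\<exists>k::int. c_rep G S p (d - S *v d) b = of_int (int (s_param p) * k)" ..
qed

theorem mainTheorem1:
  fixes G S :: "rat^'n^'n" and p :: nat
  assumes "pos_def_even_lattice G"
    and "lattice_isometry G S"
    and "has_order S p" and "p \<ge> 2"
    and "fixed_point_free S"
  shows "R_sigma G S p = {a - S *v a | a. a \<in> dual_lat G} \<inter> lat"
proof -
  have period: "(\<lambda>x. S *v x) ^^ p = id" and "p > 0"
    using \<open>has_order S p\<close> unfolding has_order_def by blast+
  have no_fixed: "\<And>y. S *v y = y \<Longrightarrow> y = 0"
    using fixed_point_free_rational[OF \<open>fixed_point_free S\<close>] .
  show ?thesis
  proof (intro set_eqI iffI)
    fix a assume "a \<in> R_sigma G S p"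
    then show "a \<in> {a - S *v a | a. a \<in> dual_lat G} \<inter> lat"
      using R_sigma_imp_coboundary[OF period \<open>p > 0\<close> no_fixed] unfolding R_sigma_def by blast
  next
    fix a assume "a \<in> {a - S *v a | a. a \<in> dual_lat G} \<inter> lat"
    then show "a \<in> R_sigma G S p"
      using coboundary_in_R_sigma[OF period \<open>p > 0\<close> no_fixed] by blast
  qed
qed

end
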